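(* Let $\mathsf V$ be a pseudovariety of semigroups. Then $\mathsf V$ is concatenation-closed if and only if the pseudovariety of semigroupoids $g\mathsf V$ is concatenation-closed.
   Context: A pseudovariety of semigroups is a class of finite semigroups closed under subsemigroups, homomorphic images and finite direct products; a pseudovariety of semigroupoids is a class of finite semigroupoids closed under divisors, finite direct products and finite coproducts (semigroups being one-vertex semigroupoids; composition of edges $s,t$ is defined when the source of $s$ equals the range of $t$). $g\mathsf V$ is the smallest pseudovariety of semigroupoids containing $\mathsf V$. For a graph $A$ with free semigroupoid of paths $A^+$, a language $L\subseteq E(A^+)$ is $\mathsf W$-recognizable if $L=\varphi^{-1}\varphi(L)$ for a homomorphism $\varphi\colon A^+\to F$ with $F\in\mathsf W$; concatenation $LK$ consists of the composable products $uv$, $u\in L$, $v\in K$. A pseudovariety of semigroups (resp. semigroupoids) is concatenation-closed if for every finite alphabet (resp. finite graph) $A$ the recognizable languages over $A$ are closed under concatenation. *)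

theory Defs
  imports Main "HOL-Library.Nat_Bijection"
begin

text \<open>Members of a
pseudovariety are encoded with carrier a finite subset of nat (every finite
semigroup has an isomorphic copy of this form; all closure conditions below
yield isomorphism-closed classes).\<close>

record 'a sgrp =
  sg_carrier :: "'a set"
  sg_mult :: "'a \<Rightarrow> 'a \<Rightarrow> 'a"

definition fin_sg :: "'a sgrp \<Rightarrow> bool" where
  "fin_sg S \<longleftrightarrow> finite (sg_carrier S) \<and> sg_carrier S \<noteq> {} \<and>
     (\<forall>x\<in>sg_carrier S. \<forall>y\<in>sg_carrier S. sg_mult S x y \<in> sg_carrier S) \<and>
     (\<forall>x\<in>sg_carrier S. \<forall>y\<in>sg_carrier S. \<forall>z\<in>sg_carrier S.
        sg_mult S (sg_mult S x y) z = sg_mult S x (sg_mult S y z))"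

definition sg_hom :: "'a sgrp \<Rightarrow> 'b sgrp \<Rightarrow> ('a \<Rightarrow> 'b) \<Rightarrow> bool" where
  "sg_hom S T h \<longleftrightarrow> (\<forall>x\<in>sg_carrier S. h x \<in> sg_carrier T) \<and>
     (\<forall>x\<in>sg_carrier S. \<forall>y\<in>sg_carrier S. h (sg_mult S x y) = sg_mult T (h x) (h y))"

definition sg_trivial :: "nat sgrp" where
  "sg_trivial = \<lparr>sg_carrier = {0}, sg_mult = (\<lambda>_ _. 0)\<rparr>"

definition sg_prod :: "nat sgrp \<Rightarrow> nat sgrp \<Rightarrow> nat sgrp" where
  "sg_prod S T = \<lparr>sg_carrier = prod_encode ` (sg_carrier S \<times> sg_carrier T),
     sg_mult = (\<lambda>x y. case (prod_decode x, prod_decode y) of ((a, b), (c, d)) \<Rightarrow>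
                    prod_encode (sg_mult S a c, sg_mult T b d))\<rparr>"

text \<open>Pseudovariety: closed under subsemigroups, homomorphic images and finite direct
products (the empty product being the trivial semigroup).\<close>

definition sg_pseudovariety :: "nat sgrp set \<Rightarrow> bool" where
  "sg_pseudovariety V \<longleftrightarrow>
     (\<forall>S\<in>V. fin_sg S) \<and>
     (\<forall>S T. T \<in> V \<longrightarrow> fin_sg S \<longrightarrow> sg_carrier S \<subseteq> sg_carrier T \<longrightarrow>
        (\<forall>x\<in>sg_carrier S. \<forall>y\<in>sg_carrier S. sg_mult S x y = sg_mult T x y) \<longrightarrow> S \<in> V) \<and>
     (\<forall>S T h. T \<in> V \<longrightarrow> fin_sg S \<longrightarrow> sg_hom T S h \<longrightarrow> h ` sg_carrier T = sg_carrier S \<longrightarrow> S \<in> V) \<and>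
     sg_trivial \<in> V \<and>
     (\<forall>S\<in>V. \<forall>T\<in>V. sg_prod S T \<in> V)"

definition words_plus :: "'a set \<Rightarrow> 'a list set" where
  "words_plus A = {w. w \<noteq> [] \<and> set w \<subseteq> A}"

definition sg_recognizable :: "nat sgrp set \<Rightarrow> 'a set \<Rightarrow> 'a list set \<Rightarrow> bool" where
  "sg_recognizable V A L \<longleftrightarrow> L \<subseteq> words_plus A \<and>
     (\<exists>S\<in>V. \<exists>\<phi>. (\<forall>w\<in>words_plus A. \<phi> w \<in> sg_carrier S) \<and>
        (\<forall>u\<in>words_plus A. \<forall>v\<in>words_plus A. \<phi> (u @ v) = sg_mult S (\<phi> u) (\<phi> v)) \<and>
        L = {w \<in> words_plus A. \<phi> w \<in> \<phi> ` L})"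

definition word_concat :: "'a list set \<Rightarrow> 'a list set \<Rightarrow> 'a list set" where
  "word_concat L K = {u @ v | u v. u \<in> L \<and> v \<in> K}"

definition sg_concat_closed :: "nat sgrp set \<Rightarrow> bool" where
  "sg_concat_closed V \<longleftrightarrow>
     (\<forall>A :: nat set. finite A \<longrightarrow> (\<forall>L K. sg_recognizable V A L \<longrightarrow> sg_recognizable V A K \<longrightarrow>
        sg_recognizable V A (word_concat L K)))"

text \<open>Convention: the composite cmp s t (written st) is defined when the source of s
equals the range (target) of t; it then has source src t and range tgt s.\<close>

record ('v, 'e) sgd =
  sgd_verts :: "'v set"
  sgd_edges :: "'e set"
  sgd_src :: "'e \<Rightarrow> 'v"
  sgd_tgt :: "'e \<Rightarrow> 'v"
  sgd_cmp :: "'e \<Rightarrow> 'e \<Rightarrow> 'e"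

definition semigroupoid :: "('v, 'e) sgd \<Rightarrow> bool" where
  "semigroupoid S \<longleftrightarrow>
     (\<forall>e\<in>sgd_edges S. sgd_src S e \<in> sgd_verts S \<and> sgd_tgt S e \<in> sgd_verts S) \<and>
     (\<forall>s\<in>sgd_edges S. \<forall>t\<in>sgd_edges S. sgd_src S s = sgd_tgt S t \<longrightarrow>
        sgd_cmp S s t \<in> sgd_edges S \<and> sgd_src S (sgd_cmp S s t) = sgd_src S t \<and>
        sgd_tgt S (sgd_cmp S s t) = sgd_tgt S s) \<and>
     (\<forall>s\<in>sgd_edges S. \<forall>t\<in>sgd_edges S. \<forall>u\<in>sgd_edges S.
        sgd_src S s = sgd_tgt S t \<longrightarrow> sgd_src S t = sgd_tgt S u \<longrightarrow>
        sgd_cmp S (sgd_cmp S s t) u = sgd_cmp S s (sgd_cmp S t u))"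

definition fin_sgd :: "('v, 'e) sgd \<Rightarrow> bool" where
  "fin_sgd S \<longleftrightarrow> semigroupoid S \<and> finite (sgd_verts S) \<and> finite (sgd_edges S)"

definition sgd_hom :: "('v, 'e) sgd \<Rightarrow> ('w, 'f) sgd \<Rightarrow> ('v \<Rightarrow> 'w) \<Rightarrow> ('e \<Rightarrow> 'f) \<Rightarrow> bool" where
  "sgd_hom S T hv he \<longleftrightarrow>
     (\<forall>x\<in>sgd_verts S. hv x \<in> sgd_verts T) \<and>
     (\<forall>e\<in>sgd_edges S. he e \<in> sgd_edges T \<and> sgd_src T (he e) = hv (sgd_src S e) \<and>
        sgd_tgt T (he e) = hv (sgd_tgt S e)) \<and>
     (\<forall>s\<in>sgd_edges S. \<forall>t\<in>sgd_edges S. sgd_src S s = sgd_tgt S t \<longrightarrow>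
        he (sgd_cmp S s t) = sgd_cmp T (he s) (he t))"

text \<open>Division in the sense of Tilson: a vertex map together with an edge relation
sending each edge to a nonempty set of edges between the image vertices, which is
a relational morphism and is injective on coterminal edges.\<close>

definition sgd_divides :: "('v, 'e) sgd \<Rightarrow> ('w, 'f) sgd \<Rightarrow> bool" where
  "sgd_divides S T \<longleftrightarrow> (\<exists>(hv :: 'v \<Rightarrow> 'w) (R :: 'e \<Rightarrow> 'f set).
     (\<forall>x\<in>sgd_verts S. hv x \<in> sgd_verts T) \<and>
     (\<forall>e\<in>sgd_edges S. R e \<noteq> {} \<and>
        R e \<subseteq> {f \<in> sgd_edges T. sgd_src T f = hv (sgd_src S e) \<and> sgd_tgt T f = hv (sgd_tgt S e)}) \<and>
     (\<forall>s\<in>sgd_edges S. \<forall>t\<in>sgd_edges S. sgd_src S s = sgd_tgt S t \<longrightarrow>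
        (\<forall>f\<in>R s. \<forall>g\<in>R t. sgd_cmp T f g \<in> R (sgd_cmp S s t))) \<and>
     (\<forall>s\<in>sgd_edges S. \<forall>t\<in>sgd_edges S. sgd_src S s = sgd_src S t \<longrightarrow> sgd_tgt S s = sgd_tgt S t \<longrightarrow>
        R s \<inter> R t \<noteq> {} \<longrightarrow> s = t))"

definition sgd_trivial :: "(nat, nat) sgd" where
  "sgd_trivial = \<lparr>sgd_verts = {0}, sgd_edges = {0}, sgd_src = (\<lambda>_. 0), sgd_tgt = (\<lambda>_. 0),
     sgd_cmp = (\<lambda>_ _. 0)\<rparr>"

definition sgd_empty :: "(nat, nat) sgd" where
  "sgd_empty = \<lparr>sgd_verts = {}, sgd_edges = {}, sgd_src = (\<lambda>_. 0), sgd_tgt = (\<lambda>_. 0),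
     sgd_cmp = (\<lambda>_ _. 0)\<rparr>"

definition sgd_prod :: "(nat, nat) sgd \<Rightarrow> (nat, nat) sgd \<Rightarrow> (nat, nat) sgd" where
  "sgd_prod S T = \<lparr>sgd_verts = prod_encode ` (sgd_verts S \<times> sgd_verts T),
     sgd_edges = prod_encode ` (sgd_edges S \<times> sgd_edges T),
     sgd_src = (\<lambda>e. case prod_decode e of (a, b) \<Rightarrow> prod_encode (sgd_src S a, sgd_src T b)),
     sgd_tgt = (\<lambda>e. case prod_decode e of (a, b) \<Rightarrow> prod_encode (sgd_tgt S a, sgd_tgt T b)),
     sgd_cmp = (\<lambda>x y. case (prod_decode x, prod_decode y) of ((a, b), (c, d)) \<Rightarrow>
                    prod_encode (sgd_cmp S a c, sgd_cmp T b d))\<rparr>"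

definition sgd_coprod :: "(nat, nat) sgd \<Rightarrow> (nat, nat) sgd \<Rightarrow> (nat, nat) sgd" where
  "sgd_coprod S T = \<lparr>sgd_verts = sum_encode ` (Inl ` sgd_verts S \<union> Inr ` sgd_verts T),
     sgd_edges = sum_encode ` (Inl ` sgd_edges S \<union> Inr ` sgd_edges T),
     sgd_src = (\<lambda>e. case sum_decode e of Inl a \<Rightarrow> sum_encode (Inl (sgd_src S a))
                                      | Inr b \<Rightarrow> sum_encode (Inr (sgd_src T b))),
     sgd_tgt = (\<lambda>e. case sum_decode e of Inl a \<Rightarrow> sum_encode (Inl (sgd_tgt S a))
                                      | Inr b \<Rightarrow> sum_encode (Inr (sgd_tgt T b))),
     sgd_cmp = (\<lambda>x y. case (sum_decode x, sum_decode y) of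
                    (Inl a, Inl c) \<Rightarrow> sum_encode (Inl (sgd_cmp S a c))
                  | (Inr b, Inr d) \<Rightarrow> sum_encode (Inr (sgd_cmp T b d))
                  | _ \<Rightarrow> 0)\<rparr>"

text \<open>Pseudovariety of semigroupoids: closed under divisors, finite direct products
(empty product = trivial semigroupoid) and finite coproducts (empty coproduct =
empty semigroupoid).\<close>

definition sgd_pseudovariety :: "(nat, nat) sgd set \<Rightarrow> bool" where
  "sgd_pseudovariety W \<longleftrightarrow>
     (\<forall>S\<in>W. fin_sgd S) \<and>
     (\<forall>S T. T \<in> W \<longrightarrow> fin_sgd S \<longrightarrow> sgd_divides S T \<longrightarrow> S \<in> W) \<and>
     sgd_trivial \<in> W \<and>
     (\<forall>S\<in>W. \<forall>T\<in>W. sgd_prod S T \<in> W) \<and>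
     sgd_empty \<in> W \<and>
     (\<forall>S\<in>W. \<forall>T\<in>W. sgd_coprod S T \<in> W)"

definition sg_as_sgd :: "nat sgrp \<Rightarrow> (nat, nat) sgd" where
  "sg_as_sgd S = \<lparr>sgd_verts = {0}, sgd_edges = sg_carrier S, sgd_src = (\<lambda>_. 0),
     sgd_tgt = (\<lambda>_. 0), sgd_cmp = sg_mult S\<rparr>"

definition global_pv :: "nat sgrp set \<Rightarrow> (nat, nat) sgd set" where
  "global_pv V = \<Inter> {W. sgd_pseudovariety W \<and> sg_as_sgd ` V \<subseteq> W}"

record ('v, 'e) graph =
  gr_verts :: "'v set"
  gr_edges :: "'e set"
  gr_src :: "'e \<Rightarrow> 'v"
  gr_tgt :: "'e \<Rightarrow> 'v"

definition finite_graph :: "('v, 'e) graph \<Rightarrow> bool" where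
  "finite_graph A \<longleftrightarrow> finite (gr_verts A) \<and> finite (gr_edges A) \<and>
     (\<forall>e\<in>gr_edges A. gr_src A e \<in> gr_verts A \<and> gr_tgt A e \<in> gr_verts A)"

definition is_path :: "('v, 'e) graph \<Rightarrow> 'e list \<Rightarrow> bool" where
  "is_path A w \<longleftrightarrow> w \<noteq> [] \<and> set w \<subseteq> gr_edges A \<and>
     (\<forall>i. Suc i < length w \<longrightarrow> gr_src A (w ! i) = gr_tgt A (w ! Suc i))"

definition free_sgd :: "('v, 'e) graph \<Rightarrow> ('v, 'e list) sgd" where
  "free_sgd A = \<lparr>sgd_verts = gr_verts A, sgd_edges = {w. is_path A w},
     sgd_src = (\<lambda>w. gr_src A (last w)), sgd_tgt = (\<lambda>w. gr_tgt A (hd w)),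
     sgd_cmp = (@)\<rparr>"

definition sgd_recognizable :: "(nat, nat) sgd set \<Rightarrow> ('v, 'e) graph \<Rightarrow> 'e list set \<Rightarrow> bool" where
  "sgd_recognizable W A L \<longleftrightarrow> L \<subseteq> sgd_edges (free_sgd A) \<and>
     (\<exists>F\<in>W. \<exists>hv he. sgd_hom (free_sgd A) F hv he \<and>
        L = {w \<in> sgd_edges (free_sgd A). he w \<in> he ` L})"

definition path_concat :: "('v, 'e) graph \<Rightarrow> 'e list set \<Rightarrow> 'e list set \<Rightarrow> 'e list set" where
  "path_concat A L K = {u @ v | u v. u \<in> L \<and> v \<in> K \<and>
      sgd_src (free_sgd A) u = sgd_tgt (free_sgd A) v}"

definition sgd_concat_closed :: "(nat, nat) sgd set \<Rightarrow> bool" where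
  "sgd_concat_closed W \<longleftrightarrow>
     (\<forall>A :: (nat, nat) graph. finite_graph A \<longrightarrow> (\<forall>L K. sgd_recognizable W A L \<longrightarrow>
        sgd_recognizable W A K \<longrightarrow> sgd_recognizable W A (path_concat A L K)))"

end

theory Submission
  imports Defs
begin

text \<open>
  The semigroupoids in gV are exactly the divisors of (one-vertex semigroupoids of) members of V,
  and we only need that every member of gV divides some S in V.  Such a division turns a
  homomorphism from the free semigroupoid on a graph A into a member of gV into a semigroup
  morphism from the free semigroup on the edges of A into S, whose value on a path, together with
  the two end vertices of the path, determines the image of the path.  So a gV-recognizable path
  language is determined by a V-recognizable word language together with conditions on the first
  and last edge.  If V is concatenation-closed, it contains the null semigroup on two elements
  and these edge conditions are V-recognizable, so every gV-recognizable path language is the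
  set of paths in a V-recognizable word language, and path concatenation is the restriction to
  paths of word concatenation.  Conversely, a one-vertex graph has all words as paths, and there
  gV-recognizability, V-recognizability and the two concatenations coincide.
\<close>

section \<open>Division of semigroupoids\<close>

lemma sg_pseudovariety_fin_sg: "sg_pseudovariety V \<Longrightarrow> S \<in> V \<Longrightarrow> fin_sg S"
  unfolding sg_pseudovariety_def by blast

lemma sg_pseudovariety_subsemigroup:
  assumes "sg_pseudovariety V" "T \<in> V" "fin_sg S" "sg_carrier S \<subseteq> sg_carrier T"
    "\<forall>x\<in>sg_carrier S. \<forall>y\<in>sg_carrier S. sg_mult S x y = sg_mult T x y"
  shows "S \<in> V"
  using assms unfolding sg_pseudovariety_def by blast

lemma sg_pseudovariety_hom_image:
  assumes "sg_pseudovariety V" "T \<in> V" "fin_sg S" "sg_hom T S h" "h ` sg_carrier T = sg_carrier S"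
  shows "S \<in> V"
  using assms unfolding sg_pseudovariety_def by blast

lemma sg_pseudovariety_trivial: "sg_pseudovariety V \<Longrightarrow> sg_trivial \<in> V"
  unfolding sg_pseudovariety_def by blast

lemma sg_pseudovariety_prod: "sg_pseudovariety V \<Longrightarrow> S \<in> V \<Longrightarrow> T \<in> V \<Longrightarrow> sg_prod S T \<in> V"
  unfolding sg_pseudovariety_def by blast

lemma sg_prod_simps [simp]:
  "sg_carrier (sg_prod S T) = prod_encode ` (sg_carrier S \<times> sg_carrier T)"
  "sg_mult (sg_prod S T) (prod_encode (a, b)) (prod_encode (c, d)) =
     prod_encode (sg_mult S a c, sg_mult T b d)"
  by (simp_all add: sg_prod_def)


lemma sgd_dividesI:
  assumes "\<And>x. x \<in> sgd_verts C \<Longrightarrow> hv x \<in> sgd_verts D"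
    and "\<And>e. e \<in> sgd_edges C \<Longrightarrow> R e \<noteq> {}"
    and "\<And>e f. e \<in> sgd_edges C \<Longrightarrow> f \<in> R e \<Longrightarrow>
      f \<in> sgd_edges D \<and> sgd_src D f = hv (sgd_src C e) \<and> sgd_tgt D f = hv (sgd_tgt C e)"
    and "\<And>s t f g. s \<in> sgd_edges C \<Longrightarrow> t \<in> sgd_edges C \<Longrightarrow> sgd_src C s = sgd_tgt C t \<Longrightarrow>
      f \<in> R s \<Longrightarrow> g \<in> R t \<Longrightarrow> sgd_cmp D f g \<in> R (sgd_cmp C s t)"
    and "\<And>s t f. s \<in> sgd_edges C \<Longrightarrow> t \<in> sgd_edges C \<Longrightarrow> sgd_src C s = sgd_src C t \<Longrightarrow>
      sgd_tgt C s = sgd_tgt C t \<Longrightarrow> f \<in> R s \<Longrightarrow> f \<in> R t \<Longrightarrow> s = t"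
  shows "sgd_divides C D"
  unfolding sgd_divides_def
  by (intro exI[of _ hv] exI[of _ R] conjI ballI impI subsetI CollectI) (use assms in blast)+

lemma sgd_dividesE:
  assumes "sgd_divides C D"
  obtains hv R where "\<And>x. x \<in> sgd_verts C \<Longrightarrow> hv x \<in> sgd_verts D"
    and "\<And>e. e \<in> sgd_edges C \<Longrightarrow> R e \<noteq> {}"
    and "\<And>e f. e \<in> sgd_edges C \<Longrightarrow> f \<in> R e \<Longrightarrow>
      f \<in> sgd_edges D \<and> sgd_src D f = hv (sgd_src C e) \<and> sgd_tgt D f = hv (sgd_tgt C e)"
    and "\<And>s t f g. s \<in> sgd_edges C \<Longrightarrow> t \<in> sgd_edges C \<Longrightarrow> sgd_src C s = sgd_tgt C t \<Longrightarrow>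
      f \<in> R s \<Longrightarrow> g \<in> R t \<Longrightarrow> sgd_cmp D f g \<in> R (sgd_cmp C s t)"
    and "\<And>s t f. s \<in> sgd_edges C \<Longrightarrow> t \<in> sgd_edges C \<Longrightarrow> sgd_src C s = sgd_src C t \<Longrightarrow>
      sgd_tgt C s = sgd_tgt C t \<Longrightarrow> f \<in> R s \<Longrightarrow> f \<in> R t \<Longrightarrow> s = t"
proof -
  obtain hv R where "\<forall>x\<in>sgd_verts C. hv x \<in> sgd_verts D"
    "\<forall>e\<in>sgd_edges C. R e \<noteq> {} \<and>
       R e \<subseteq> {f \<in> sgd_edges D. sgd_src D f = hv (sgd_src C e) \<and> sgd_tgt D f = hv (sgd_tgt C e)}"
    "\<forall>s\<in>sgd_edges C. \<forall>t\<in>sgd_edges C. sgd_src C s = sgd_tgt C t \<longrightarrow>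
       (\<forall>f\<in>R s. \<forall>g\<in>R t. sgd_cmp D f g \<in> R (sgd_cmp C s t))"
    "\<forall>s\<in>sgd_edges C. \<forall>t\<in>sgd_edges C. sgd_src C s = sgd_src C t \<longrightarrow> sgd_tgt C s = sgd_tgt C t \<longrightarrow>
       R s \<inter> R t \<noteq> {} \<longrightarrow> s = t"
    using assms unfolding sgd_divides_def by blast
  then show thesis by (intro that[of hv R]) blast+
qed

lemma sgd_divides_trans:
  assumes "sgd_divides C D" "sgd_divides D E"
  shows "sgd_divides C E"
proof -
  obtain hv R where hv: "\<And>x. x \<in> sgd_verts C \<Longrightarrow> hv x \<in> sgd_verts D"
    and R_ne: "\<And>e. e \<in> sgd_edges C \<Longrightarrow> R e \<noteq> {}"
    and R_edge: "\<And>e f. e \<in> sgd_edges C \<Longrightarrow> f \<in> R e \<Longrightarrow>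
      f \<in> sgd_edges D \<and> sgd_src D f = hv (sgd_src C e) \<and> sgd_tgt D f = hv (sgd_tgt C e)"
    and R_cmp: "\<And>s t f g. s \<in> sgd_edges C \<Longrightarrow> t \<in> sgd_edges C \<Longrightarrow> sgd_src C s = sgd_tgt C t \<Longrightarrow>
      f \<in> R s \<Longrightarrow> g \<in> R t \<Longrightarrow> sgd_cmp D f g \<in> R (sgd_cmp C s t)"
    and R_inj: "\<And>s t f. s \<in> sgd_edges C \<Longrightarrow> t \<in> sgd_edges C \<Longrightarrow> sgd_src C s = sgd_src C t \<Longrightarrow>
      sgd_tgt C s = sgd_tgt C t \<Longrightarrow> f \<in> R s \<Longrightarrow> f \<in> R t \<Longrightarrow> s = t"
    using assms(1) by (rule sgd_dividesE) blast
  obtain hv' R' where hv': "\<And>x. x \<in> sgd_verts D \<Longrightarrow> hv' x \<in> sgd_verts E"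
    and R'_ne: "\<And>e. e \<in> sgd_edges D \<Longrightarrow> R' e \<noteq> {}"
    and R'_edge: "\<And>e f. e \<in> sgd_edges D \<Longrightarrow> f \<in> R' e \<Longrightarrow>
      f \<in> sgd_edges E \<and> sgd_src E f = hv' (sgd_src D e) \<and> sgd_tgt E f = hv' (sgd_tgt D e)"
    and R'_cmp: "\<And>s t f g. s \<in> sgd_edges D \<Longrightarrow> t \<in> sgd_edges D \<Longrightarrow> sgd_src D s = sgd_tgt D t \<Longrightarrow>
      f \<in> R' s \<Longrightarrow> g \<in> R' t \<Longrightarrow> sgd_cmp E f g \<in> R' (sgd_cmp D s t)"
    and R'_inj: "\<And>s t f. s \<in> sgd_edges D \<Longrightarrow> t \<in> sgd_edges D \<Longrightarrow> sgd_src D s = sgd_src D t \<Longrightarrow>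
      sgd_tgt D s = sgd_tgt D t \<Longrightarrow> f \<in> R' s \<Longrightarrow> f \<in> R' t \<Longrightarrow> s = t"
    using assms(2) by (rule sgd_dividesE) blast
  show ?thesis
  proof (rule sgd_dividesI[of C "hv' \<circ> hv" E "\<lambda>e. \<Union>f\<in>R e. R' f"])
    show "(hv' \<circ> hv) x \<in> sgd_verts E" if "x \<in> sgd_verts C" for x
      using hv hv' that by simp
  next
    fix e assume e: "e \<in> sgd_edges C"
    then obtain f where "f \<in> R e" using R_ne by blast
    then show "(\<Union>f\<in>R e. R' f) \<noteq> {}" using R_edge[OF e] R'_ne by blast
  next
    fix e g assume e: "e \<in> sgd_edges C" and "g \<in> (\<Union>f\<in>R e. R' f)"
    then obtain f where f: "f \<in> R e" "g \<in> R' f" by blast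
    then show "g \<in> sgd_edges E \<and> sgd_src E g = (hv' \<circ> hv) (sgd_src C e) \<and>
        sgd_tgt E g = (hv' \<circ> hv) (sgd_tgt C e)"
      using R_edge[OF e f(1)] R'_edge[of f g] by simp
  next
    fix s t g g' assume s: "s \<in> sgd_edges C" and t: "t \<in> sgd_edges C" and st: "sgd_src C s = sgd_tgt C t"
      and "g \<in> (\<Union>f\<in>R s. R' f)" "g' \<in> (\<Union>f\<in>R t. R' f)"
    then obtain f f' where f: "f \<in> R s" "g \<in> R' f" and f': "f' \<in> R t" "g' \<in> R' f'" by blast
    have "sgd_cmp E g g' \<in> R' (sgd_cmp D f f')"
      using R'_cmp[of f f' g g'] R_edge[OF s f(1)] R_edge[OF t f'(1)] st f(2) f'(2) by simp
    moreover have "sgd_cmp D f f' \<in> R (sgd_cmp C s t)" using R_cmp s t st f(1) f'(1) by blast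
    ultimately show "sgd_cmp E g g' \<in> (\<Union>f\<in>R (sgd_cmp C s t). R' f)" by blast
  next
    fix s t g assume s: "s \<in> sgd_edges C" and t: "t \<in> sgd_edges C"
      and src: "sgd_src C s = sgd_src C t" and tgt: "sgd_tgt C s = sgd_tgt C t"
      and "g \<in> (\<Union>f\<in>R s. R' f)" "g \<in> (\<Union>f\<in>R t. R' f)"
    then obtain f f' where f: "f \<in> R s" "g \<in> R' f" and f': "f' \<in> R t" "g \<in> R' f'" by blast
    have "f = f'"
      using R'_inj[of f f' g] R_edge[OF s f(1)] R_edge[OF t f'(1)] src tgt f(2) f'(2) by simp
    then show "s = t" using R_inj s t src tgt f(1) f'(1) by blast
  qed
qed

text \<open>A division of C into the one-vertex semigroupoid of S; the vertex map carries no
  information there and is omitted.\<close>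

definition sgd_divides_sg_via :: "('v, 'e) sgd \<Rightarrow> nat sgrp \<Rightarrow> ('e \<Rightarrow> nat set) \<Rightarrow> bool" where
  "sgd_divides_sg_via C S R \<longleftrightarrow>
     (\<forall>e\<in>sgd_edges C. R e \<noteq> {} \<and> R e \<subseteq> sg_carrier S) \<and>
     (\<forall>s\<in>sgd_edges C. \<forall>t\<in>sgd_edges C. sgd_src C s = sgd_tgt C t \<longrightarrow>
        (\<forall>f\<in>R s. \<forall>g\<in>R t. sg_mult S f g \<in> R (sgd_cmp C s t))) \<and>
     (\<forall>s\<in>sgd_edges C. \<forall>t\<in>sgd_edges C. sgd_src C s = sgd_src C t \<longrightarrow> sgd_tgt C s = sgd_tgt C t \<longrightarrow>
        R s \<inter> R t \<noteq> {} \<longrightarrow> s = t)"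

lemma sgd_divides_sg_viaD:
  assumes "sgd_divides_sg_via C S R"
  shows "\<And>e. e \<in> sgd_edges C \<Longrightarrow> R e \<noteq> {}"
    and "\<And>e. e \<in> sgd_edges C \<Longrightarrow> R e \<subseteq> sg_carrier S"
    and "\<And>s t f g. s \<in> sgd_edges C \<Longrightarrow> t \<in> sgd_edges C \<Longrightarrow> sgd_src C s = sgd_tgt C t \<Longrightarrow>
      f \<in> R s \<Longrightarrow> g \<in> R t \<Longrightarrow> sg_mult S f g \<in> R (sgd_cmp C s t)"
    and "\<And>s t f. s \<in> sgd_edges C \<Longrightarrow> t \<in> sgd_edges C \<Longrightarrow> sgd_src C s = sgd_src C t \<Longrightarrow>
      sgd_tgt C s = sgd_tgt C t \<Longrightarrow> f \<in> R s \<Longrightarrow> f \<in> R t \<Longrightarrow> s = t"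
  using assms unfolding sgd_divides_sg_via_def by blast+

lemma sgd_divides_sg_iff: "sgd_divides C (sg_as_sgd S) \<longleftrightarrow> (\<exists>R. sgd_divides_sg_via C S R)"
proof
  assume "sgd_divides C (sg_as_sgd S)"
  then obtain hv :: "'a \<Rightarrow> nat" and R where
    "\<And>e. e \<in> sgd_edges C \<Longrightarrow> R e \<noteq> {}"
    "\<And>e f. e \<in> sgd_edges C \<Longrightarrow> f \<in> R e \<Longrightarrow>
      f \<in> sgd_edges (sg_as_sgd S) \<and> sgd_src (sg_as_sgd S) f = hv (sgd_src C e) \<and>
      sgd_tgt (sg_as_sgd S) f = hv (sgd_tgt C e)"
    "\<And>s t f g. s \<in> sgd_edges C \<Longrightarrow> t \<in> sgd_edges C \<Longrightarrow> sgd_src C s = sgd_tgt C t \<Longrightarrow>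
      f \<in> R s \<Longrightarrow> g \<in> R t \<Longrightarrow> sgd_cmp (sg_as_sgd S) f g \<in> R (sgd_cmp C s t)"
    "\<And>s t f. s \<in> sgd_edges C \<Longrightarrow> t \<in> sgd_edges C \<Longrightarrow> sgd_src C s = sgd_src C t \<Longrightarrow>
      sgd_tgt C s = sgd_tgt C t \<Longrightarrow> f \<in> R s \<Longrightarrow> f \<in> R t \<Longrightarrow> s = t"
    by (elim sgd_dividesE) blast
  then have "sgd_divides_sg_via C S R"
    unfolding sgd_divides_sg_via_def sg_as_sgd_def by (simp add: subset_iff) blast
  then show "\<exists>R. sgd_divides_sg_via C S R" by blast
next
  assume "\<exists>R. sgd_divides_sg_via C S R"
  then obtain R where R: "sgd_divides_sg_via C S R" by blast
  show "sgd_divides C (sg_as_sgd S)"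
    by (rule sgd_dividesI[of C "\<lambda>_. 0" _ R])
      (use sgd_divides_sg_viaD[OF R] in \<open>auto simp: sg_as_sgd_def\<close>)
qed

lemma sgd_prod_simps [simp]:
  "sgd_verts (sgd_prod S T) = prod_encode ` (sgd_verts S \<times> sgd_verts T)"
  "sgd_edges (sgd_prod S T) = prod_encode ` (sgd_edges S \<times> sgd_edges T)"
  "sgd_src (sgd_prod S T) (prod_encode (a, b)) = prod_encode (sgd_src S a, sgd_src T b)"
  "sgd_tgt (sgd_prod S T) (prod_encode (a, b)) = prod_encode (sgd_tgt S a, sgd_tgt T b)"
  "sgd_cmp (sgd_prod S T) (prod_encode (a, b)) (prod_encode (c, d)) =
     prod_encode (sgd_cmp S a c, sgd_cmp T b d)"
  by (simp_all add: sgd_prod_def)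

lemma sgd_coprod_simps [simp]:
  "sgd_verts (sgd_coprod S T) = sum_encode ` (Inl ` sgd_verts S \<union> Inr ` sgd_verts T)"
  "sgd_edges (sgd_coprod S T) = sum_encode ` (Inl ` sgd_edges S \<union> Inr ` sgd_edges T)"
  "sgd_src (sgd_coprod S T) (sum_encode (Inl a)) = sum_encode (Inl (sgd_src S a))"
  "sgd_src (sgd_coprod S T) (sum_encode (Inr b)) = sum_encode (Inr (sgd_src T b))"
  "sgd_tgt (sgd_coprod S T) (sum_encode (Inl a)) = sum_encode (Inl (sgd_tgt S a))"
  "sgd_tgt (sgd_coprod S T) (sum_encode (Inr b)) = sum_encode (Inr (sgd_tgt T b))"
  "sgd_cmp (sgd_coprod S T) (sum_encode (Inl a)) (sum_encode (Inl c)) = sum_encode (Inl (sgd_cmp S a c))"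
  "sgd_cmp (sgd_coprod S T) (sum_encode (Inr b)) (sum_encode (Inr d)) = sum_encode (Inr (sgd_cmp T b d))"
  by (simp_all add: sgd_coprod_def)

lemma fin_sgd_prod: "fin_sgd S \<Longrightarrow> fin_sgd T \<Longrightarrow> fin_sgd (sgd_prod S T)"
  unfolding fin_sgd_def semigroupoid_def by auto

lemma fin_sgd_coprod: "fin_sgd S \<Longrightarrow> fin_sgd T \<Longrightarrow> fin_sgd (sgd_coprod S T)"
  unfolding fin_sgd_def semigroupoid_def by (auto simp: sum_encode_eq)

lemma sgd_divides_sg_via_prod:
  assumes "sgd_divides_sg_via C S R" "sgd_divides_sg_via D T Q"
  shows "sgd_divides_sg_via (sgd_prod C D) (sg_prod S T)
           (\<lambda>e. case prod_decode e of (a, b) \<Rightarrow> prod_encode ` (R a \<times> Q b))"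
  using assms unfolding sgd_divides_sg_via_def
  by (simp add: image_subset_iff Times_Int_Times flip: image_Int[OF inj_prod_encode]) blast

lemma sgd_divides_sg_via_coprod:
  assumes "sgd_divides_sg_via C S R" "sgd_divides_sg_via D T Q" "fin_sg S" "fin_sg T"
  shows "sgd_divides_sg_via (sgd_coprod C D) (sg_prod S T)
           (\<lambda>e. case sum_decode e of Inl a \<Rightarrow> prod_encode ` (R a \<times> sg_carrier T)
                                   | Inr b \<Rightarrow> prod_encode ` (sg_carrier S \<times> Q b))"
  using assms unfolding sgd_divides_sg_via_def fin_sg_def
  by (simp add: ball_Un image_subset_iff Times_Int_Times sum_encode_eq
      flip: image_Int[OF inj_prod_encode]) fastforce

section \<open>Members of gV divide members of V\<close>

text \<open>In fact gV equals this class; only the inclusion is needed.\<close>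

definition sgd_divisors :: "nat sgrp set \<Rightarrow> (nat, nat) sgd set" where
  "sgd_divisors V = {C. fin_sgd C \<and> (\<exists>S\<in>V. \<exists>R. sgd_divides_sg_via C S R)}"

lemma sg_as_sgd_in_sgd_divisors:
  assumes "sg_pseudovariety V" "S \<in> V"
  shows "sg_as_sgd S \<in> sgd_divisors V"
proof -
  have "fin_sgd (sg_as_sgd S)"
    using sg_pseudovariety_fin_sg[OF assms]
    unfolding fin_sg_def fin_sgd_def semigroupoid_def sg_as_sgd_def by auto
  moreover have "sgd_divides_sg_via (sg_as_sgd S) S (\<lambda>e. {e})"
    unfolding sgd_divides_sg_via_def sg_as_sgd_def by auto
  ultimately show ?thesis
    unfolding sgd_divisors_def using assms(2) by blast
qed

lemma sgd_pseudovariety_sgd_divisors: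
  assumes V: "sg_pseudovariety V"
  shows "sgd_pseudovariety (sgd_divisors V)"
  unfolding sgd_pseudovariety_def
proof (intro conjI ballI allI impI)
  show "fin_sgd C" if "C \<in> sgd_divisors V" for C
    using that unfolding sgd_divisors_def by blast
next
  fix C D :: "(nat, nat) sgd"
  assume "D \<in> sgd_divisors V" "fin_sgd C" "sgd_divides C D"
  moreover obtain S R where "S \<in> V" "sgd_divides_sg_via D S R"
    using calculation(1) unfolding sgd_divisors_def by blast
  ultimately have "S \<in> V" "sgd_divides C (sg_as_sgd S)"
    using sgd_divides_trans sgd_divides_sg_iff by blast+
  then show "C \<in> sgd_divisors V"
    unfolding sgd_divisors_def sgd_divides_sg_iff using \<open>fin_sgd C\<close> by blast
next
  have "sgd_divides_sg_via sgd_trivial sg_trivial (\<lambda>_. {0})"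
    unfolding sgd_divides_sg_via_def sgd_trivial_def sg_trivial_def by simp
  moreover have "fin_sgd sgd_trivial"
    unfolding fin_sgd_def semigroupoid_def sgd_trivial_def by simp
  ultimately show "sgd_trivial \<in> sgd_divisors V"
    unfolding sgd_divisors_def using sg_pseudovariety_trivial[OF V] by blast
next
  have "sgd_divides_sg_via sgd_empty sg_trivial (\<lambda>_. {})"
    unfolding sgd_divides_sg_via_def sgd_empty_def by simp
  moreover have "fin_sgd sgd_empty"
    unfolding fin_sgd_def semigroupoid_def sgd_empty_def by simp
  ultimately show "sgd_empty \<in> sgd_divisors V"
    unfolding sgd_divisors_def using sg_pseudovariety_trivial[OF V] by blast
next
  fix C D assume "C \<in> sgd_divisors V" "D \<in> sgd_divisors V"
  then obtain S T R Q where "S \<in> V" "T \<in> V" "fin_sgd C" "fin_sgd D"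
    "sgd_divides_sg_via C S R" "sgd_divides_sg_via D T Q"
    unfolding sgd_divisors_def by blast
  moreover have "fin_sg S" "fin_sg T" "sg_prod S T \<in> V"
    using calculation V by (simp_all add: sg_pseudovariety_fin_sg sg_pseudovariety_prod)
  ultimately show "sgd_prod C D \<in> sgd_divisors V" "sgd_coprod C D \<in> sgd_divisors V"
    unfolding sgd_divisors_def mem_Collect_eq
    by (meson fin_sgd_prod sgd_divides_sg_via_prod, meson fin_sgd_coprod sgd_divides_sg_via_coprod)
qed

lemma global_pv_divides_sg:
  assumes "sg_pseudovariety V" "C \<in> global_pv V"
  obtains S R where "S \<in> V" "sgd_divides_sg_via C S R"
proof -
  have "global_pv V \<subseteq> sgd_divisors V"
    unfolding global_pv_def
    by (rule Inter_lower)
      (use assms(1) sgd_pseudovariety_sgd_divisors sg_as_sgd_in_sgd_divisors in blast)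
  then show ?thesis using assms(2) that unfolding sgd_divisors_def by blast
qed

lemma sg_as_sgd_in_global_pv: "S \<in> V \<Longrightarrow> sg_as_sgd S \<in> global_pv V"
  unfolding global_pv_def by blast

section \<open>Paths and semigroup morphisms on words\<close>

lemma is_path_single [simp]: "is_path A [e] \<longleftrightarrow> e \<in> gr_edges A"
  unfolding is_path_def by simp

lemma is_path_Cons:
  assumes "w \<noteq> []"
  shows "is_path A (e # w) \<longleftrightarrow> e \<in> gr_edges A \<and> is_path A w \<and> gr_src A e = gr_tgt A (hd w)"
  using assms unfolding is_path_def by (cases w) (auto simp: All_less_Suc2)

lemma is_path_append:
  assumes "u \<noteq> []" "v \<noteq> []"
  shows "is_path A (u @ v) \<longleftrightarrow> is_path A u \<and> is_path A v \<and> gr_src A (last u) = gr_tgt A (hd v)"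
  using assms(1)
proof (induction u)
  case (Cons e u)
  then show ?case
    using assms(2) by (cases "u = []") (auto simp: is_path_Cons)
qed simp

lemma is_path_words_plus: "is_path A w \<Longrightarrow> w \<in> words_plus (gr_edges A)"
  unfolding is_path_def words_plus_def by auto

lemma free_sgd_simps [simp]:
  "sgd_verts (free_sgd A) = gr_verts A"
  "sgd_edges (free_sgd A) = {w. is_path A w}"
  "sgd_src (free_sgd A) w = gr_src A (last w)"
  "sgd_tgt (free_sgd A) w = gr_tgt A (hd w)"
  "sgd_cmp (free_sgd A) u v = u @ v"
  by (simp_all add: free_sgd_def)

definition word_morphism :: "'a set \<Rightarrow> nat sgrp \<Rightarrow> ('a list \<Rightarrow> nat) \<Rightarrow> bool" where
  "word_morphism A S \<phi> \<longleftrightarrow> (\<forall>w\<in>words_plus A. \<phi> w \<in> sg_carrier S) \<and>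
     (\<forall>u\<in>words_plus A. \<forall>v\<in>words_plus A. \<phi> (u @ v) = sg_mult S (\<phi> u) (\<phi> v))"

fun word_extension :: "('a \<Rightarrow> nat) \<Rightarrow> (nat \<Rightarrow> nat \<Rightarrow> nat) \<Rightarrow> 'a list \<Rightarrow> nat" where
  "word_extension \<sigma> m [] = 0"
| "word_extension \<sigma> m [a] = \<sigma> a"
| "word_extension \<sigma> m (a # b # w) = m (\<sigma> a) (word_extension \<sigma> m (b # w))"

lemma word_extension_Cons:
  "w \<noteq> [] \<Longrightarrow> word_extension \<sigma> m (a # w) = m (\<sigma> a) (word_extension \<sigma> m w)"
  by (cases w) simp_all

lemma word_morphism_word_extension:
  assumes S: "fin_sg S" and \<sigma>: "\<forall>a\<in>A. \<sigma> a \<in> sg_carrier S"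
  shows "word_morphism A S (word_extension \<sigma> (sg_mult S))"
proof -
  let ?\<phi> = "word_extension \<sigma> (sg_mult S)"
  have closed: "\<And>x y. x \<in> sg_carrier S \<Longrightarrow> y \<in> sg_carrier S \<Longrightarrow> sg_mult S x y \<in> sg_carrier S"
    and assoc: "\<And>x y z. x \<in> sg_carrier S \<Longrightarrow> y \<in> sg_carrier S \<Longrightarrow> z \<in> sg_carrier S \<Longrightarrow>
      sg_mult S (sg_mult S x y) z = sg_mult S x (sg_mult S y z)"
    using S unfolding fin_sg_def by blast+
  have carrier: "?\<phi> w \<in> sg_carrier S" if "w \<in> words_plus A" for w
    using that
  proof (induction w)
    case (Cons a w)
    then show ?case
      using \<sigma> closed by (cases "w = []") (auto simp: words_plus_def word_extension_Cons)
  qed (simp add: words_plus_def)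
  have "?\<phi> (u @ v) = sg_mult S (?\<phi> u) (?\<phi> v)" if "u \<in> words_plus A" "v \<in> words_plus A" for u v
    using that(1)
  proof (induction u)
    case (Cons a u)
    have "v \<noteq> []" "\<sigma> a \<in> sg_carrier S" "?\<phi> v \<in> sg_carrier S"
      using Cons.prems that(2) \<sigma> carrier by (auto simp: words_plus_def)
    moreover have "u \<noteq> [] \<Longrightarrow> u \<in> words_plus A"
      using Cons.prems by (simp add: words_plus_def)
    ultimately show ?case
      using Cons.IH carrier assoc by (cases "u = []") (simp_all add: word_extension_Cons)
  qed (simp add: words_plus_def)
  then show ?thesis unfolding word_morphism_def using carrier by blast
qed

lemma free_sgd_homD:
  assumes "sgd_hom (free_sgd A) F hv he" "is_path A w"
  shows "he w \<in> sgd_edges F" "sgd_src F (he w) = hv (gr_src A (last w))"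
    "sgd_tgt F (he w) = hv (gr_tgt A (hd w))"
  using assms unfolding sgd_hom_def by simp_all

lemma free_sgd_hom_append:
  assumes "sgd_hom (free_sgd A) F hv he" "is_path A u" "is_path A v" "gr_src A (last u) = gr_tgt A (hd v)"
  shows "he (u @ v) = sgd_cmp F (he u) (he v)"
  using assms unfolding sgd_hom_def by simp

lemma free_sgd_hom_factorization:
  assumes hom: "sgd_hom (free_sgd A) F hv he" and div: "sgd_divides_sg_via F S R" and S: "fin_sg S"
  obtains \<phi> where "word_morphism (gr_edges A) S \<phi>" "\<And>w. is_path A w \<Longrightarrow> \<phi> w \<in> R (he w)"
proof -
  note he = free_sgd_homD[OF hom]
  define \<sigma> where "\<sigma> e = (SOME f. f \<in> R (he [e]))" for e
  have \<sigma>: "\<sigma> e \<in> R (he [e])" "\<sigma> e \<in> sg_carrier S" if "e \<in> gr_edges A" for e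
  proof -
    have "he [e] \<in> sgd_edges F" using he(1)[of "[e]"] that by simp
    then have "R (he [e]) \<noteq> {}" "R (he [e]) \<subseteq> sg_carrier S"
      using sgd_divides_sg_viaD(1,2)[OF div] by blast+
    moreover from this(1) show "\<sigma> e \<in> R (he [e])"
      unfolding \<sigma>_def by (simp add: some_in_eq)
    ultimately show "\<sigma> e \<in> sg_carrier S" by blast
  qed
  let ?\<phi> = "word_extension \<sigma> (sg_mult S)"
  have "word_morphism (gr_edges A) S ?\<phi>"
    by (rule word_morphism_word_extension[OF S]) (use \<sigma>(2) in blast)
  moreover have "?\<phi> w \<in> R (he w)" if "is_path A w" for w
    using that
  proof (induction w)
    case (Cons a w)
    show ?case
    proof (cases "w = []")
      case False
      then have path: "is_path A [a]" "is_path A w" "gr_src A (last [a]) = gr_tgt A (hd w)"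
        using Cons.prems by (simp_all add: is_path_Cons[OF False])
      have "sgd_src F (he [a]) = sgd_tgt F (he w)"
        using he(2)[OF path(1)] he(3)[OF path(2)] path(3) by simp
      moreover have "\<sigma> a \<in> R (he [a])" using \<sigma>(1) path(1) by simp
      ultimately have "sg_mult S (\<sigma> a) (?\<phi> w) \<in> R (sgd_cmp F (he [a]) (he w))"
        using sgd_divides_sg_viaD(3)[OF div] he(1)[OF path(1)] he(1)[OF path(2)] Cons.IH[OF path(2)]
        by blast
      then show ?thesis
        using free_sgd_hom_append[OF hom path] False by (simp add: word_extension_Cons)
    next
      case True
      then show ?thesis using Cons.prems \<sigma>(1)[of a] by simp
    qed
  qed (simp add: is_path_def)
  ultimately show ?thesis by (rule that)
qed

section \<open>Recognizable word languages\<close>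

lemma sg_recognizableI:
  assumes "S \<in> V" "word_morphism A S \<phi>" "X \<subseteq> words_plus A"
  shows "sg_recognizable V A {w \<in> words_plus A. \<phi> w \<in> \<phi> ` X}"
  using assms unfolding sg_recognizable_def word_morphism_def
  by (intro conjI bexI[of _ S] exI[of _ \<phi>]) auto

lemma sg_recognizable_saturatedI:
  assumes "S \<in> V" "word_morphism A S \<phi>" "L \<subseteq> words_plus A"
    "\<And>w u. w \<in> words_plus A \<Longrightarrow> u \<in> L \<Longrightarrow> \<phi> w = \<phi> u \<Longrightarrow> w \<in> L"
  shows "sg_recognizable V A L"
proof -
  have "{w \<in> words_plus A. \<phi> w \<in> \<phi> ` L} = L" using assms(3,4) by auto
  then show ?thesis using sg_recognizableI[OF assms(1-3)] by simp
qed

lemma sg_recognizableE: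
  assumes "sg_recognizable V A L"
  obtains S \<phi> where "S \<in> V" "word_morphism A S \<phi>"
    "\<And>w u. w \<in> words_plus A \<Longrightarrow> u \<in> words_plus A \<Longrightarrow> \<phi> w = \<phi> u \<Longrightarrow> w \<in> L \<longleftrightarrow> u \<in> L"
proof -
  obtain S \<phi> where "S \<in> V" "word_morphism A S \<phi>"
    and saturated: "L = {w \<in> words_plus A. \<phi> w \<in> \<phi> ` L}"
    using assms unfolding sg_recognizable_def word_morphism_def by blast
  moreover have "w \<in> L \<longleftrightarrow> u \<in> L"
    if "w \<in> words_plus A" "u \<in> words_plus A" "\<phi> w = \<phi> u" for w u
    using that by (subst (1 2) saturated) simp
  ultimately show ?thesis using that by blast
qed

lemma sg_recognizable_subset: "sg_recognizable V A L \<Longrightarrow> L \<subseteq> words_plus A"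
  unfolding sg_recognizable_def by blast

lemma word_morphism_const_trivial: "word_morphism A sg_trivial (\<lambda>_. 0)"
  unfolding word_morphism_def sg_trivial_def by simp

lemma sg_recognizable_words_plus: "sg_pseudovariety V \<Longrightarrow> sg_recognizable V A (words_plus A)"
  by (rule sg_recognizable_saturatedI[OF sg_pseudovariety_trivial word_morphism_const_trivial]) auto

lemma sg_recognizable_empty: "sg_pseudovariety V \<Longrightarrow> sg_recognizable V A {}"
  by (rule sg_recognizable_saturatedI[OF sg_pseudovariety_trivial word_morphism_const_trivial]) auto

lemma sg_recognizable_if_determined:
  assumes V: "sg_pseudovariety V" and L: "sg_recognizable V A L" and K: "sg_recognizable V A K"
    and X: "X \<subseteq> words_plus A"
    and determined: "\<And>w u. w \<in> words_plus A \<Longrightarrow> u \<in> words_plus A \<Longrightarrow>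
      (w \<in> L \<longleftrightarrow> u \<in> L) \<Longrightarrow> (w \<in> K \<longleftrightarrow> u \<in> K) \<Longrightarrow> (w \<in> X \<longleftrightarrow> u \<in> X)"
  shows "sg_recognizable V A X"
proof -
  obtain S \<phi> where S: "S \<in> V" "word_morphism A S \<phi>"
    and sat_L: "\<And>w u. w \<in> words_plus A \<Longrightarrow> u \<in> words_plus A \<Longrightarrow> \<phi> w = \<phi> u \<Longrightarrow> w \<in> L \<longleftrightarrow> u \<in> L"
    by (rule sg_recognizableE[OF L]) blast
  obtain T \<psi> where T: "T \<in> V" "word_morphism A T \<psi>"
    and sat_K: "\<And>w u. w \<in> words_plus A \<Longrightarrow> u \<in> words_plus A \<Longrightarrow> \<psi> w = \<psi> u \<Longrightarrow> w \<in> K \<longleftrightarrow> u \<in> K"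
    by (rule sg_recognizableE[OF K]) blast
  have "word_morphism A (sg_prod S T) (\<lambda>w. prod_encode (\<phi> w, \<psi> w))"
    using S(2) T(2) unfolding word_morphism_def by simp
  then show ?thesis
  proof (rule sg_recognizable_saturatedI[OF sg_pseudovariety_prod[OF V S(1) T(1)] _ X])
    fix w u assume "w \<in> words_plus A" "u \<in> X" "prod_encode (\<phi> w, \<psi> w) = prod_encode (\<phi> u, \<psi> u)"
    then show "w \<in> X" using determined[of w u] sat_L[of w u] sat_K[of w u] X by auto
  qed
qed

lemma sg_recognizable_Un:
  "sg_pseudovariety V \<Longrightarrow> sg_recognizable V A L \<Longrightarrow> sg_recognizable V A K \<Longrightarrow> sg_recognizable V A (L \<union> K)"
  by (rule sg_recognizable_if_determined[of V A L K]) (auto dest: sg_recognizable_subset)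

lemma sg_recognizable_Int:
  "sg_pseudovariety V \<Longrightarrow> sg_recognizable V A L \<Longrightarrow> sg_recognizable V A K \<Longrightarrow> sg_recognizable V A (L \<inter> K)"
  by (rule sg_recognizable_if_determined[of V A L K]) (auto dest: sg_recognizable_subset)

lemma sg_recognizable_UN:
  assumes V: "sg_pseudovariety V" and "finite I" "\<And>i. i \<in> I \<Longrightarrow> sg_recognizable V A (L i)"
  shows "sg_recognizable V A (\<Union>i\<in>I. L i)"
  using assms(2,3)
  by (induction I rule: finite_induct) (simp_all add: sg_recognizable_empty sg_recognizable_Un V)

lemma sg_pseudovariety_word_morphism_image:
  assumes V: "sg_pseudovariety V" and S: "S \<in> V" and \<phi>: "word_morphism A S \<phi>" and A: "A \<noteq> {}"
  shows "\<lparr>sg_carrier = \<phi> ` words_plus A, sg_mult = sg_mult S\<rparr> \<in> V"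
proof -
  have sub: "\<phi> ` words_plus A \<subseteq> sg_carrier S"
    using \<phi> unfolding word_morphism_def by blast
  have closed: "sg_mult S (\<phi> u) (\<phi> v) \<in> \<phi> ` words_plus A"
    if "u \<in> words_plus A" "v \<in> words_plus A" for u v
  proof -
    have "u @ v \<in> words_plus A" using that by (simp add: words_plus_def)
    moreover have "\<phi> (u @ v) = sg_mult S (\<phi> u) (\<phi> v)"
      using \<phi> that unfolding word_morphism_def by blast
    ultimately show ?thesis by (metis image_eqI)
  qed
  obtain a where "[a] \<in> words_plus A" using A by (auto simp: words_plus_def)
  then have "\<phi> ` words_plus A \<noteq> {}" by blast
  then have "fin_sg \<lparr>sg_carrier = \<phi> ` words_plus A, sg_mult = sg_mult S\<rparr>"
    using sg_pseudovariety_fin_sg[OF V S] sub closed finite_subset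
    unfolding fin_sg_def by (simp add: subset_iff) blast
  then show ?thesis
    by (rule sg_pseudovariety_subsemigroup[OF V S]) (use sub in simp_all)
qed

section \<open>Consequences of concatenation-closure\<close>

definition sg_null2 :: "nat sgrp" where
  "sg_null2 = \<lparr>sg_carrier = {0, 1}, sg_mult = (\<lambda>_ _. 0)\<rparr>"

text \<open>Over a one-letter alphabet the words of length at least two form a recognizable language,
  so its recognizing morphism separates the letter from all products; identifying all other
  elements of the image gives a morphism onto the null semigroup.\<close>

lemma sg_null2_in_concat_closed:
  assumes V: "sg_pseudovariety V" and cc: "sg_concat_closed V"
  shows "sg_null2 \<in> V"
proof -
  let ?W = "words_plus {0::nat}"
  have "sg_recognizable V {0} (word_concat ?W ?W)"
    using cc sg_recognizable_words_plus[OF V] unfolding sg_concat_closed_def by blast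
  then obtain S \<phi> where S: "S \<in> V" "word_morphism {0} S \<phi>"
    and sat: "\<And>w u. w \<in> ?W \<Longrightarrow> u \<in> ?W \<Longrightarrow> \<phi> w = \<phi> u \<Longrightarrow>
      w \<in> word_concat ?W ?W \<longleftrightarrow> u \<in> word_concat ?W ?W"
    by (rule sg_recognizableE) blast
  have letter: "[0] \<in> ?W" "[0] \<notin> word_concat ?W ?W"
    by (auto simp: words_plus_def word_concat_def Cons_eq_append_conv)
  have product: "\<phi> (u @ v) \<noteq> \<phi> [0]" if "u \<in> ?W" "v \<in> ?W" for u v
  proof
    assume "\<phi> (u @ v) = \<phi> [0]"
    moreover have "u @ v \<in> ?W" "u @ v \<in> word_concat ?W ?W"
      using that by (auto simp: words_plus_def word_concat_def)
    ultimately show False using sat letter by blast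
  qed
  define T where "T = \<lparr>sg_carrier = \<phi> ` ?W, sg_mult = sg_mult S\<rparr>"
  have "T \<in> V"
    unfolding T_def by (rule sg_pseudovariety_word_morphism_image[OF V S]) simp
  define h where "h x = (if x = \<phi> [0] then 1 else 0::nat)" for x
  have "sg_hom T sg_null2 h"
    unfolding sg_hom_def
  proof (intro conjI ballI)
    fix x y assume "x \<in> sg_carrier T" "y \<in> sg_carrier T"
    then obtain u v where "u \<in> ?W" "v \<in> ?W" "x = \<phi> u" "y = \<phi> v"
      unfolding T_def by auto
    moreover have "\<phi> (u @ v) = sg_mult S (\<phi> u) (\<phi> v)"
      using S(2) calculation(1,2) unfolding word_morphism_def by blast
    ultimately show "h (sg_mult T x y) = sg_mult sg_null2 (h x) (h y)"
      using product[of u v] unfolding h_def T_def sg_null2_def by simp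
  qed (simp add: h_def sg_null2_def)
  moreover have "h ` sg_carrier T = sg_carrier sg_null2"
  proof -
    have "h (\<phi> [0]) = 1" "h (\<phi> ([0] @ [0])) = 0"
      using product[OF letter(1) letter(1)] unfolding h_def by simp_all
    moreover have "[0] @ [0] \<in> ?W" by (simp add: words_plus_def)
    ultimately have "{0, 1} \<subseteq> h ` sg_carrier T"
      using letter(1) unfolding T_def by (simp add: image_iff) metis
    moreover have "h ` sg_carrier T \<subseteq> {0, 1}" by (auto simp: h_def)
    ultimately show ?thesis unfolding sg_null2_def by auto
  qed
  moreover have "fin_sg sg_null2" unfolding fin_sg_def sg_null2_def by simp
  ultimately show ?thesis using sg_pseudovariety_hom_image[OF V \<open>T \<in> V\<close>] by blast
qed

lemma sg_recognizable_letters: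
  assumes V: "sg_pseudovariety V" and cc: "sg_concat_closed V" and B: "B \<subseteq> A"
  shows "sg_recognizable V A {[b] | b. b \<in> B}"
proof -
  define \<phi> where "\<phi> w = (if \<exists>b\<in>B. w = [b] then 1 else 0::nat)" for w :: "'a list"
  have "word_morphism A sg_null2 \<phi>"
    unfolding word_morphism_def sg_null2_def \<phi>_def
    by (auto simp: words_plus_def append_eq_Cons_conv)
  then show ?thesis
    by (rule sg_recognizable_saturatedI[OF sg_null2_in_concat_closed[OF V cc]])
      (use B in \<open>auto simp: \<phi>_def words_plus_def split: if_splits\<close>)
qed

lemma sg_concat_closedD:
  assumes "sg_concat_closed V" "finite (A :: nat set)" "sg_recognizable V A L" "sg_recognizable V A K"
  shows "sg_recognizable V A (word_concat L K)"
  using assms unfolding sg_concat_closed_def by blast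

lemma sg_recognizable_hd:
  assumes V: "sg_pseudovariety V" and cc: "sg_concat_closed V" and A: "finite (A :: nat set)"
  shows "sg_recognizable V A {w \<in> words_plus A. P (hd w)}"
proof -
  let ?B = "{[b] | b. b \<in> {a \<in> A. P a}}"
  have B: "sg_recognizable V A ?B" by (rule sg_recognizable_letters[OF V cc]) blast
  then have "sg_recognizable V A (word_concat ?B (words_plus A))"
    using sg_concat_closedD[OF cc A] sg_recognizable_words_plus[OF V] by blast
  then have "sg_recognizable V A (word_concat ?B (words_plus A) \<union> ?B)"
    using sg_recognizable_Un[OF V _ B] by blast
  moreover have "word_concat ?B (words_plus A) \<union> ?B = {w \<in> words_plus A. P (hd w)}"
  proof (intro equalityI subsetI)
    fix w assume "w \<in> {w \<in> words_plus A. P (hd w)}"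
    then obtain b v where w: "w = [b] @ v" "b \<in> A" "P b" "set v \<subseteq> A"
      by (cases w) (auto simp: words_plus_def)
    show "w \<in> word_concat ?B (words_plus A) \<union> ?B"
    proof (cases "v = []")
      case False
      then have "v \<in> words_plus A" using w by (simp add: words_plus_def)
      then show ?thesis using w unfolding word_concat_def by blast
    qed (use w in simp)
  qed (auto simp: word_concat_def words_plus_def)
  ultimately show ?thesis by simp
qed

lemma sg_recognizable_last:
  assumes V: "sg_pseudovariety V" and cc: "sg_concat_closed V" and A: "finite (A :: nat set)"
  shows "sg_recognizable V A {w \<in> words_plus A. P (last w)}"
proof -
  let ?B = "{[b] | b. b \<in> {a \<in> A. P a}}"
  have B: "sg_recognizable V A ?B" by (rule sg_recognizable_letters[OF V cc]) blast
  then have "sg_recognizable V A (word_concat (words_plus A) ?B)"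
    using sg_concat_closedD[OF cc A] sg_recognizable_words_plus[OF V] by blast
  then have "sg_recognizable V A (word_concat (words_plus A) ?B \<union> ?B)"
    using sg_recognizable_Un[OF V _ B] by blast
  moreover have "word_concat (words_plus A) ?B \<union> ?B = {w \<in> words_plus A. P (last w)}"
  proof (intro equalityI subsetI)
    fix w assume "w \<in> {w \<in> words_plus A. P (last w)}"
    then obtain b v where w: "w = v @ [b]" "b \<in> A" "P b" "set v \<subseteq> A"
      by (cases w rule: rev_cases) (auto simp: words_plus_def)
    show "w \<in> word_concat (words_plus A) ?B \<union> ?B"
    proof (cases "v = []")
      case False
      then have "v \<in> words_plus A" using w by (simp add: words_plus_def)
      then show ?thesis using w unfolding word_concat_def by blast
    qed (use w in simp)
  qed (auto simp: word_concat_def words_plus_def)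
  ultimately show ?thesis by simp
qed

section \<open>Recognizable path languages\<close>

lemma sgd_recognizable_subset_paths: "sgd_recognizable W A L \<Longrightarrow> L \<subseteq> {w. is_path A w}"
  unfolding sgd_recognizable_def by simp

lemma global_pv_recognizableE:
  assumes V: "sg_pseudovariety V" and L: "sgd_recognizable (global_pv V) A L"
  obtains S \<phi> where "S \<in> V" "word_morphism (gr_edges A) S \<phi>"
    "\<And>w u. is_path A w \<Longrightarrow> is_path A u \<Longrightarrow> gr_src A (last w) = gr_src A (last u) \<Longrightarrow>
      gr_tgt A (hd w) = gr_tgt A (hd u) \<Longrightarrow> \<phi> w = \<phi> u \<Longrightarrow> w \<in> L \<longleftrightarrow> u \<in> L"
proof -
  obtain F hv he where F: "F \<in> global_pv V" and hom: "sgd_hom (free_sgd A) F hv he"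
    and saturated: "L = {w \<in> sgd_edges (free_sgd A). he w \<in> he ` L}"
    using L unfolding sgd_recognizable_def by blast
  obtain S R where S: "S \<in> V" and div: "sgd_divides_sg_via F S R"
    using global_pv_divides_sg[OF V F] by blast
  obtain \<phi> where \<phi>: "word_morphism (gr_edges A) S \<phi>" and \<phi>R: "\<And>w. is_path A w \<Longrightarrow> \<phi> w \<in> R (he w)"
    using free_sgd_hom_factorization[OF hom div sg_pseudovariety_fin_sg[OF V S]] by blast
  have saturation: "w \<in> L \<longleftrightarrow> u \<in> L"
    if w: "is_path A w" and u: "is_path A u" and ends: "gr_src A (last w) = gr_src A (last u)"
      "gr_tgt A (hd w) = gr_tgt A (hd u)" and eq: "\<phi> w = \<phi> u" for w u
  proof -
    have "he w = he u"
    proof (rule sgd_divides_sg_viaD(4)[OF div])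
      show "he w \<in> sgd_edges F" "he u \<in> sgd_edges F"
        using free_sgd_homD(1)[OF hom] w u by blast+
      show "sgd_src F (he w) = sgd_src F (he u)" "sgd_tgt F (he w) = sgd_tgt F (he u)"
        using free_sgd_homD(2,3)[OF hom] w u ends by simp_all
      show "\<phi> w \<in> R (he w)" "\<phi> w \<in> R (he u)"
        using \<phi>R[OF w] \<phi>R[OF u] eq by simp_all
    qed
    then show ?thesis using w u by (subst (1 2) saturated) auto
  qed
  from S \<phi> saturation show ?thesis by (rule that)
qed

lemma sgd_recognizable_global_pv_restrict:
  assumes "sg_recognizable V (gr_edges A) X"
  shows "sgd_recognizable (global_pv V) A {w \<in> X. is_path A w}"
proof -
  obtain S \<phi> where S: "S \<in> V" "word_morphism (gr_edges A) S \<phi>"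
    and sat: "\<And>w u. w \<in> words_plus (gr_edges A) \<Longrightarrow> u \<in> words_plus (gr_edges A) \<Longrightarrow>
      \<phi> w = \<phi> u \<Longrightarrow> w \<in> X \<longleftrightarrow> u \<in> X"
    by (rule sg_recognizableE[OF assms]) blast
  have "sgd_hom (free_sgd A) (sg_as_sgd S) (\<lambda>_. 0) \<phi>"
    using S(2) is_path_words_plus[of A]
    unfolding sgd_hom_def word_morphism_def by (simp add: sg_as_sgd_def)
  moreover have "{w \<in> X. is_path A w} =
      {w \<in> sgd_edges (free_sgd A). \<phi> w \<in> \<phi> ` {w \<in> X. is_path A w}}"
    using sat is_path_words_plus[of A] by auto
  ultimately show ?thesis
    unfolding sgd_recognizable_def using sg_as_sgd_in_global_pv[OF S(1)] by auto
qed

lemma sgd_recognizable_global_pv_sg_restriction: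
  assumes V: "sg_pseudovariety V" and cc: "sg_concat_closed V"
    and A: "finite_graph (A :: (nat, nat) graph)" and L: "sgd_recognizable (global_pv V) A L"
  obtains L' where "sg_recognizable V (gr_edges A) L'" "L = {w \<in> L'. is_path A w}"
proof -
  let ?W = "words_plus (gr_edges A)"
  have fin: "finite (gr_verts A)" "finite (gr_edges A)"
    and ends: "\<And>e. e \<in> gr_edges A \<Longrightarrow> gr_src A e \<in> gr_verts A \<and> gr_tgt A e \<in> gr_verts A"
    using A unfolding finite_graph_def by blast+
  obtain S \<phi> where S: "S \<in> V" "word_morphism (gr_edges A) S \<phi>"
    and sat: "\<And>w u. is_path A w \<Longrightarrow> is_path A u \<Longrightarrow> gr_src A (last w) = gr_src A (last u) \<Longrightarrow>
      gr_tgt A (hd w) = gr_tgt A (hd u) \<Longrightarrow> \<phi> w = \<phi> u \<Longrightarrow> w \<in> L \<longleftrightarrow> u \<in> L"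
    by (rule global_pv_recognizableE[OF V L]) blast
  have L_paths: "L \<subseteq> {w. is_path A w}" using L by (rule sgd_recognizable_subset_paths)
  txt \<open>L is the set of paths in the union, over all vertices x and y, of the words whose first
    edge has target x, whose last edge has source y, and whose image lies in the image of the
    paths of L with these ends.\<close>
  define L_between where "L_between x y = {u \<in> L. gr_tgt A (hd u) = x \<and> gr_src A (last u) = y}" for x y
  define piece where "piece x y = {w \<in> ?W. \<phi> w \<in> \<phi> ` L_between x y} \<inter>
     {w \<in> ?W. gr_tgt A (hd w) = x} \<inter> {w \<in> ?W. gr_src A (last w) = y}" for x y
  define L' where "L' = (\<Union>p\<in>gr_verts A \<times> gr_verts A. piece (fst p) (snd p))"
  have "sg_recognizable V (gr_edges A) (piece x y)" for x y
  proof -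
    have "L_between x y \<subseteq> ?W"
      using L_paths is_path_words_plus unfolding L_between_def by blast
    then show ?thesis
      unfolding piece_def
      by (intro sg_recognizable_Int[OF V] sg_recognizableI[OF S]
          sg_recognizable_hd[OF V cc fin(2), of "\<lambda>e. gr_tgt A e = x"]
          sg_recognizable_last[OF V cc fin(2), of "\<lambda>e. gr_src A e = y"])
  qed
  then have "sg_recognizable V (gr_edges A) L'"
    unfolding L'_def using fin by (intro sg_recognizable_UN[OF V]) simp_all
  moreover have "L = {w \<in> L'. is_path A w}"
  proof (intro equalityI subsetI)
    fix w assume w: "w \<in> L"
    then have "is_path A w" "w \<in> ?W" using L_paths is_path_words_plus by blast+
    moreover have "hd w \<in> gr_edges A" "last w \<in> gr_edges A"
      using \<open>w \<in> ?W\<close> unfolding words_plus_def by auto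
    moreover have "w \<in> piece (gr_tgt A (hd w)) (gr_src A (last w))"
      using w \<open>w \<in> ?W\<close> unfolding piece_def L_between_def by blast
    ultimately show "w \<in> {w \<in> L'. is_path A w}"
      unfolding L'_def using ends by (intro CollectI conjI UN_I[of "(gr_tgt A (hd w), gr_src A (last w))"]) auto
  next
    fix w assume "w \<in> {w \<in> L'. is_path A w}"
    then obtain x y where w: "is_path A w" "w \<in> piece x y"
      unfolding L'_def by auto
    then obtain u where "u \<in> L_between x y" "\<phi> w = \<phi> u"
      "gr_tgt A (hd w) = x" "gr_src A (last w) = y"
      unfolding piece_def by auto
    then show "w \<in> L"
      using sat[of w u] L_paths w(1) unfolding L_between_def by auto
  qed
  ultimately show ?thesis by (rule that)
qed

lemma path_concat_restrict:
  assumes "L \<subseteq> words_plus (gr_edges A)" "K \<subseteq> words_plus (gr_edges A)"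
  shows "path_concat A {w \<in> L. is_path A w} {w \<in> K. is_path A w} = {w \<in> word_concat L K. is_path A w}"
proof (intro equalityI subsetI)
  have nonempty: "u \<noteq> []" "v \<noteq> []" if "u \<in> L" "v \<in> K" for u v
    using assms that unfolding words_plus_def by blast+
  {
    fix w assume "w \<in> path_concat A {w \<in> L. is_path A w} {w \<in> K. is_path A w}"
    then obtain u v where "w = u @ v" "u \<in> L" "v \<in> K" "is_path A u" "is_path A v"
      "gr_src A (last u) = gr_tgt A (hd v)"
      unfolding path_concat_def by auto
    moreover have "u \<noteq> []" "v \<noteq> []" using nonempty calculation(2,3) by blast+
    ultimately show "w \<in> {w \<in> word_concat L K. is_path A w}"
      using is_path_append[of u v A] unfolding word_concat_def by blast
  next
    fix w assume "w \<in> {w \<in> word_concat L K. is_path A w}"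
    then obtain u v where "w = u @ v" "u \<in> L" "v \<in> K" "is_path A (u @ v)"
      unfolding word_concat_def by auto
    moreover have "u \<noteq> []" "v \<noteq> []" using nonempty calculation(2,3) by blast+
    ultimately show "w \<in> path_concat A {w \<in> L. is_path A w} {w \<in> K. is_path A w}"
      using is_path_append[of u v A] unfolding path_concat_def by auto
  }
qed

definition one_vertex_graph :: "'e set \<Rightarrow> (nat, 'e) graph" where
  "one_vertex_graph A = \<lparr>gr_verts = {0}, gr_edges = A, gr_src = (\<lambda>_. 0), gr_tgt = (\<lambda>_. 0)\<rparr>"

lemma one_vertex_graph_simps [simp]:
  "gr_edges (one_vertex_graph A) = A"
  "gr_src (one_vertex_graph A) e = 0"
  "gr_tgt (one_vertex_graph A) e = 0"
  by (simp_all add: one_vertex_graph_def)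

lemma is_path_one_vertex_graph [simp]: "is_path (one_vertex_graph A) w \<longleftrightarrow> w \<in> words_plus A"
  unfolding is_path_def words_plus_def by simp

lemma finite_graph_one_vertex_graph: "finite A \<Longrightarrow> finite_graph (one_vertex_graph A)"
  unfolding finite_graph_def one_vertex_graph_def by simp

lemma path_concat_one_vertex_graph: "path_concat (one_vertex_graph A) L K = word_concat L K"
  unfolding path_concat_def word_concat_def by simp

lemma sgd_recognizable_one_vertex_graph_iff:
  assumes V: "sg_pseudovariety V"
  shows "sgd_recognizable (global_pv V) (one_vertex_graph A) L \<longleftrightarrow> sg_recognizable V A L"
proof
  assume L: "sgd_recognizable (global_pv V) (one_vertex_graph A) L"
  obtain S \<phi> where S: "S \<in> V" "word_morphism A S \<phi>"
    and sat: "\<And>w u. is_path (one_vertex_graph A) w \<Longrightarrow> is_path (one_vertex_graph A) u \<Longrightarrow>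
      gr_src (one_vertex_graph A) (last w) = gr_src (one_vertex_graph A) (last u) \<Longrightarrow>
      gr_tgt (one_vertex_graph A) (hd w) = gr_tgt (one_vertex_graph A) (hd u) \<Longrightarrow>
      \<phi> w = \<phi> u \<Longrightarrow> w \<in> L \<longleftrightarrow> u \<in> L"
    using global_pv_recognizableE[OF V L] by (metis one_vertex_graph_simps(1))
  have L_words: "L \<subseteq> words_plus A" using sgd_recognizable_subset_paths[OF L] by auto
  then show "sg_recognizable V A L"
  proof (rule sg_recognizable_saturatedI[OF S])
    fix w u assume "w \<in> words_plus A" "u \<in> L" "\<phi> w = \<phi> u"
    then show "w \<in> L" using sat[of w u] L_words by auto
  qed
next
  assume "sg_recognizable V A L"
  then have "sgd_recognizable (global_pv V) (one_vertex_graph A) {w \<in> L. is_path (one_vertex_graph A) w}"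
    by (intro sgd_recognizable_global_pv_restrict) simp
  moreover have "{w \<in> L. is_path (one_vertex_graph A) w} = L"
    using sg_recognizable_subset[OF \<open>sg_recognizable V A L\<close>] by auto
  ultimately show "sgd_recognizable (global_pv V) (one_vertex_graph A) L" by simp
qed

theorem mainTheorem4:
  assumes "sg_pseudovariety V"
  shows "sg_concat_closed V \<longleftrightarrow> sgd_concat_closed (global_pv V)"
proof
  assume cc: "sg_concat_closed V"
  show "sgd_concat_closed (global_pv V)"
    unfolding sgd_concat_closed_def
  proof (intro allI impI)
    fix A :: "(nat, nat) graph" and L K
    assume A: "finite_graph A" and L: "sgd_recognizable (global_pv V) A L"
      and K: "sgd_recognizable (global_pv V) A K"
    obtain L' where L': "sg_recognizable V (gr_edges A) L'" "L = {w \<in> L'. is_path A w}"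
      using sgd_recognizable_global_pv_sg_restriction[OF assms cc A L] by blast
    obtain K' where K': "sg_recognizable V (gr_edges A) K'" "K = {w \<in> K'. is_path A w}"
      using sgd_recognizable_global_pv_sg_restriction[OF assms cc A K] by blast
    have "finite (gr_edges A)" using A unfolding finite_graph_def by blast
    then have "sg_recognizable V (gr_edges A) (word_concat L' K')"
      using sg_concat_closedD[OF cc _ L'(1) K'(1)] by blast
    moreover have "path_concat A L K = {w \<in> word_concat L' K'. is_path A w}"
      unfolding L'(2) K'(2)
      using path_concat_restrict sg_recognizable_subset[OF L'(1)] sg_recognizable_subset[OF K'(1)]
      by blast
    ultimately show "sgd_recognizable (global_pv V) A (path_concat A L K)"
      using sgd_recognizable_global_pv_restrict by simp
  qed
next
  assume gc: "sgd_concat_closed (global_pv V)"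
  show "sg_concat_closed V"
    unfolding sg_concat_closed_def
  proof (intro allI impI)
    fix A :: "nat set" and L K
    assume "finite A" "sg_recognizable V A L" "sg_recognizable V A K"
    then have "finite_graph (one_vertex_graph A)"
      "sgd_recognizable (global_pv V) (one_vertex_graph A) L"
      "sgd_recognizable (global_pv V) (one_vertex_graph A) K"
      by (simp_all add: finite_graph_one_vertex_graph sgd_recognizable_one_vertex_graph_iff[OF assms])
    then have "sgd_recognizable (global_pv V) (one_vertex_graph A) (path_concat (one_vertex_graph A) L K)"
      using gc unfolding sgd_concat_closed_def by blast
    then show "sg_recognizable V A (word_concat L K)"
      by (simp add: path_concat_one_vertex_graph sgd_recognizable_one_vertex_graph_iff[OF assms])
  qed
qed

end
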